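(* Under the coupled PIMH scheme described in the context, for any $n\ge1$ and $s\ge0$, $p_N^{(n)}\ge\tilde p_N^{(n-1)}\implies p_N^{(n+s)}\ge\tilde p_N^{(n+s-1)}$ almost surely. (That is, the sequence $(p_N^{(n+1)})_{n\ge0}$ stochastically dominates $(\tilde p_N^{(n)})_{n\ge0}$ in this sense.)
   Context: A particle filter (PF) call $(X_{1:T},p_N)\sim\mathrm{PF}$ returns a random path $X_{1:T}$ and a strictly positive random likelihood estimate $p_N$. Coupled PIMH: sample $(X^{(0)},p_N^{(0)})\sim\mathrm{PF}$. At iteration $n\ge1$ draw a fresh independent $(X^*,p_N^* )\sim\mathrm{PF}$ and a single $\mathfrak u\sim\mathcal U[0,1]$ shared by both chains. First chain: if $\mathfrak u\le 1\wedge p_N^*/p_N^{(n-1)}$ set $(X^{(n)},p_N^{(n)})=(X^*,p_N^* )$, else $(X^{(n)},p_N^{(n)})=(X^{(n-1)},p_N^{(n-1)})$. Second chain: at $n=1$ set $(\tilde X^{(0)},\tilde p_N^{(0)})=(X^*,p_N^* )$; for $n\ge2$, if $\mathfrak u\le 1\wedge p_N^*/\tilde p_N^{(n-2)}$ set $(\tilde X^{(n-1)},\tilde p_N^{(n-1)})=(X^*,p_N^* )$, else $(\tilde X^{(n-1)},\tilde p_N^{(n-1)})=(\tilde X^{(n-2)},\tilde p_N^{(n-2)})$. *)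

theory Defs
  imports "HOL-Probability.Probability"
begin

text \<open>Z k = (X, p_N) is the k-th particle filter output:
  Z 0 is the initial draw, Z n (n \<ge> 1) the fresh proposal at iteration n;
  u n (n \<ge> 1) is the shared uniform at iteration n.\<close>

text \<open>First chain: pimh1 Z u n = (X^(n), p_N^(n)).\<close>
fun pimh1 :: "(nat \<Rightarrow> 'x \<times> real) \<Rightarrow> (nat \<Rightarrow> real) \<Rightarrow> nat \<Rightarrow> 'x \<times> real" where
  "pimh1 Z u 0 = Z 0"
| "pimh1 Z u (Suc n) =
     (if u (Suc n) \<le> min 1 (snd (Z (Suc n)) / snd (pimh1 Z u n))
      then Z (Suc n) else pimh1 Z u n)"

text \<open>Second chain: pimh2 Z u m = (tilde X^(m), tilde p_N^(m)); it is set at iteration m+1.\<close>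
fun pimh2 :: "(nat \<Rightarrow> 'x \<times> real) \<Rightarrow> (nat \<Rightarrow> real) \<Rightarrow> nat \<Rightarrow> 'x \<times> real" where
  "pimh2 Z u 0 = Z 1"
| "pimh2 Z u (Suc m) =
     (if u (m + 2) \<le> min 1 (snd (Z (m + 2)) / snd (pimh2 Z u m))
      then Z (m + 2) else pimh2 Z u m)"

end

theory Submission
  imports Defs
begin

text \<open>Both chains see the same proposal at each iteration and share the uniform, and the
  acceptance probability \<open>min 1 (p\<^sup>* / p)\<close> is antitone in the current likelihood estimate \<open>p\<close>.
  So if the chain with the larger estimate accepts, the other one accepts too and both jump to
  the same value; if only the other one accepts, the proposal lies below the larger estimate.
  Either way the order between the two estimates is preserved, on every sample path.\<close>

definition mh_step :: "real \<Rightarrow> 'x \<times> real \<Rightarrow> 'x \<times> real \<Rightarrow> 'x \<times> real" where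
  "mh_step v z x = (if v \<le> min 1 (snd z / snd x) then z else x)"

lemma pimh1_Suc: "pimh1 Z u (Suc n) = mh_step (u (Suc n)) (Z (Suc n)) (pimh1 Z u n)"
  by (simp add: mh_step_def)

lemma pimh2_Suc: "pimh2 Z u (Suc m) = mh_step (u (Suc (Suc m))) (Z (Suc (Suc m))) (pimh2 Z u m)"
  by (simp add: mh_step_def numeral_2_eq_2)

lemma mh_step_pos: "snd z > 0 \<Longrightarrow> snd x > 0 \<Longrightarrow> snd (mh_step v z x) > 0"
  by (simp add: mh_step_def)

lemma pimh1_pos: "(\<And>k. snd (Z k) > 0) \<Longrightarrow> snd (pimh1 Z u n) > 0"
  by (induction n) (simp_all only: pimh1.simps(1) pimh1_Suc mh_step_pos)

lemma pimh2_pos: "(\<And>k. snd (Z k) > 0) \<Longrightarrow> snd (pimh2 Z u n) > 0"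
  by (induction n) (simp_all only: pimh2.simps(1) pimh2_Suc mh_step_pos)

lemma mh_step_mono:
  assumes "snd z > 0" "snd y > 0" "snd y \<le> snd x"
  shows "snd (mh_step v z y) \<le> snd (mh_step v z x)"
proof (cases "v \<le> min 1 (snd z / snd x)")
  case True
  have "snd z / snd x \<le> snd z / snd y"
    using assms by (simp add: frac_le)
  with True show ?thesis
    by (simp add: mh_step_def)
next
  case False
  have "snd x > 0"
    using assms by linarith
  have "\<not> v \<le> 1 \<or> snd z < snd x"
  proof (rule disjCI)
    assume "\<not> snd z < snd x"
    with \<open>snd x > 0\<close> have "1 \<le> snd z / snd x"
      by simp
    with False show "\<not> v \<le> 1"
      by linarith
  qed
  with False assms(3) show ?thesis
    by (auto simp: mh_step_def)
qed

lemma pimh_order_Suc: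
  assumes pos: "\<And>k. snd (Z k) > 0"
    and "snd (pimh2 Z u m) \<le> snd (pimh1 Z u (Suc m))"
  shows "snd (pimh2 Z u (Suc m)) \<le> snd (pimh1 Z u (Suc (Suc m)))"
  unfolding pimh2_Suc pimh1_Suc[of Z u "Suc m"]
  using assms pimh2_pos[OF pos] by (intro mh_step_mono) auto

lemma pimh_order_persists:
  assumes pos: "\<And>k. snd (Z k) > 0" and "n \<ge> 1"
    and "snd (pimh2 Z u (n - 1)) \<le> snd (pimh1 Z u n)"
  shows "snd (pimh2 Z u (n + s - 1)) \<le> snd (pimh1 Z u (n + s))"
proof (induction s)
  case 0
  show ?case using assms(3) by simp
next
  case (Suc s)
  obtain m where m: "n + s = Suc m"
    using \<open>n \<ge> 1\<close> by (metis add_is_0 not0_implies_Suc not_one_le_zero)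
  with Suc.IH show ?case
    using pimh_order_Suc[OF pos] by (simp del: pimh1.simps pimh2.simps)
qed

theorem proposition5:
  fixes M :: "'a measure" and S :: "'x measure"
    and Z :: "nat \<Rightarrow> 'a \<Rightarrow> 'x \<times> real"
    and u :: "nat \<Rightarrow> 'a \<Rightarrow> real"
    and n s :: nat
  assumes "prob_space M"
    and Z_meas: "\<And>k. Z k \<in> measurable M (S \<Otimes>\<^sub>M borel)"
    and Z_indep: "prob_space.indep_vars M (\<lambda>_. S \<Otimes>\<^sub>M borel) Z UNIV"
    and Z_iid: "\<And>k. distr M (S \<Otimes>\<^sub>M borel) (Z k) = distr M (S \<Otimes>\<^sub>M borel) (Z 0)"
    and Z_pos: "\<And>k \<omega>. \<omega> \<in> space M \<Longrightarrow> snd (Z k \<omega>) > 0"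
    and u_indep: "prob_space.indep_vars M (\<lambda>_. borel) u UNIV"
    and u_unif: "\<And>k. k \<ge> 1 \<Longrightarrow> distributed M lborel (u k) (\<lambda>x. indicator {0..1} x)"
    and Zu_indep: "prob_space.indep_set M
        (sets (vimage_algebra (space M) (\<lambda>\<omega> k. Z k \<omega>) (Pi\<^sub>M UNIV (\<lambda>_. S \<Otimes>\<^sub>M borel))))
        (sets (vimage_algebra (space M) (\<lambda>\<omega> k. u k \<omega>) (Pi\<^sub>M UNIV (\<lambda>_. borel))))"
    and "n \<ge> 1"
  shows "AE \<omega> in M.
           snd (pimh1 (\<lambda>k. Z k \<omega>) (\<lambda>k. u k \<omega>) n)
             \<ge> snd (pimh2 (\<lambda>k. Z k \<omega>) (\<lambda>k. u k \<omega>) (n - 1))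
           \<longrightarrow> snd (pimh1 (\<lambda>k. Z k \<omega>) (\<lambda>k. u k \<omega>) (n + s))
             \<ge> snd (pimh2 (\<lambda>k. Z k \<omega>) (\<lambda>k. u k \<omega>) (n + s - 1))"
proof (rule AE_I2, rule impI)
  fix \<omega> assume "\<omega> \<in> space M"
  then show "snd (pimh2 (\<lambda>k. Z k \<omega>) (\<lambda>k. u k \<omega>) (n - 1)) \<le> snd (pimh1 (\<lambda>k. Z k \<omega>) (\<lambda>k. u k \<omega>) n)
      \<Longrightarrow> snd (pimh2 (\<lambda>k. Z k \<omega>) (\<lambda>k. u k \<omega>) (n + s - 1)) \<le> snd (pimh1 (\<lambda>k. Z k \<omega>) (\<lambda>k. u k \<omega>) (n + s))"
    using Z_pos \<open>n \<ge> 1\<close> by (intro pimh_order_persists) auto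
qed

end
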